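(* In the setting of the context, $N$ is isomorphic to the permutation module $k[U_3/H_2]$, and its socle is spanned by $d_1^2=x^2$. Also, $K$ is isomorphic to the permutation module $k[U_3/H_1]$, and its socle is spanned by $d_2=y^2+xy$.
   Context: Let $k=\mathbb{F}_2$ and let $U_3\cong D_8$ be the group of upper unitriangular $3\times 3$ matrices over $\mathbb{F}_2$. The group $U_3$ acts on the polynomial ring $k[x,y,z]$ by graded algebra automorphisms. Its action on the degree-one part $M=\langle x,y,z\rangle$ is the natural module, and it preserves the flag $\langle x\rangle\subset\langle x,y\rangle\subset\langle x,y,z\rangle$. Let $b,c,d\in U_3$ be the elements defined as follows: - $b$ sends $y\mapsto y+x$ and fixes $x,z$; - $c$ sends $z\mapsto z+x$ and fixes $x,y$; - $d$ sends $z\mapsto z+y$ and fixes $x,y$. Let $H_1=\langle b,c\rangle$ and $H_2=\langle d\rangle$. Put $d_1=x$ and $d_2=y^2+xy$. Let $N$ be the $kU_3$-submodule of $k[x,y,z]$ generated by $\phi=z^2+yz$, and let $K$ be the $kU_3$-submodule generated by $\theta=z^2+xz$. *)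

theory Defs
  imports "HOL-Library.Poly_Mapping" "HOL-Library.Z2" "HOL-Library.Product_Plus"
begin

text \<open>The field k = F_2 is the type bit.  The polynomial ring k[x,y,z] is modelled as
finitely supported maps from exponent triples (a,b,c) (standing for x^a y^b z^c) to bit.\<close>

type_synonym kpoly = "(nat \<times> nat \<times> nat) \<Rightarrow>\<^sub>0 bit"

text \<open>3x3 matrices over F_2, indices 0,1,2; entries outside this range are 0.\<close>
type_synonym mat3 = "nat \<Rightarrow> nat \<Rightarrow> bit"

definition Cst :: "bit \<Rightarrow> kpoly" where
  "Cst c = Poly_Mapping.single (0,0,0) c"

definition smult :: "bit \<Rightarrow> kpoly \<Rightarrow> kpoly" where
  "smult c p = Cst c * p"

definition px :: kpoly where "px = Poly_Mapping.single (1,0,0) 1"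
definition py :: kpoly where "py = Poly_Mapping.single (0,1,0) 1"
definition pz :: kpoly where "pz = Poly_Mapping.single (0,0,1) 1"

definition var :: "nat \<Rightarrow> kpoly" where
  "var i = (if i = 0 then px else if i = 1 then py else pz)"

definition mmul :: "mat3 \<Rightarrow> mat3 \<Rightarrow> mat3" where
  "mmul g h = (\<lambda>i j. \<Sum>k<3. g i k * h k j)"

definition one3 :: mat3 where
  "one3 = (\<lambda>i j. if i = j \<and> i < 3 then 1 else 0)"

definition U3 :: "mat3 set" where
  "U3 = {g. (\<forall>i j. (3 \<le> i \<or> 3 \<le> j) \<longrightarrow> g i j = 0) \<and> (\<forall>i<3. g i i = 1)
           \<and> (\<forall>i<3. \<forall>j<i. g i j = 0)}"

text \<open>Action on degree one: g sends the j-th variable to sum_i g_ij (i-th variable);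
this is the natural module, preserving the flag <x> < <x,y> < <x,y,z>.\<close>
definition lin :: "mat3 \<Rightarrow> nat \<Rightarrow> kpoly" where
  "lin g j = (\<Sum>i<3. Cst (g i j) * var i)"

definition act :: "mat3 \<Rightarrow> kpoly \<Rightarrow> kpoly" where
  "act g p = (\<Sum>m\<in>Poly_Mapping.keys p.
      Cst (Poly_Mapping.lookup p m) * lin g 0 ^ fst m * lin g 1 ^ fst (snd m) * lin g 2 ^ snd (snd m))"

definition elt_b :: mat3 where
  "elt_b = (\<lambda>i j. one3 i j + (if i = 0 \<and> j = 1 then 1 else 0))"
definition elt_c :: mat3 where
  "elt_c = (\<lambda>i j. one3 i j + (if i = 0 \<and> j = 2 then 1 else 0))"
definition elt_d :: mat3 where
  "elt_d = (\<lambda>i j. one3 i j + (if i = 1 \<and> j = 2 then 1 else 0))"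

text \<open>Subgroup generated by a subset of the finite group U3.\<close>
inductive_set gen :: "mat3 set \<Rightarrow> mat3 set" for S where
  gen_one: "one3 \<in> gen S"
| gen_mul: "s \<in> S \<Longrightarrow> h \<in> gen S \<Longrightarrow> mmul s h \<in> gen S"

definition H1 :: "mat3 set" where "H1 = gen {elt_b, elt_c}"
definition H2 :: "mat3 set" where "H2 = gen {elt_d}"

definition d1 :: kpoly where "d1 = px"
definition d2 :: kpoly where "d2 = py ^ 2 + px * py"
definition phi :: kpoly where "phi = pz ^ 2 + py * pz"
definition theta :: kpoly where "theta = pz ^ 2 + px * pz"

inductive_set subgen :: "kpoly \<Rightarrow> kpoly set" for v where
  sg_gen: "v \<in> subgen v"
| sg_zero: "0 \<in> subgen v"
| sg_add: "u \<in> subgen v \<Longrightarrow> w \<in> subgen v \<Longrightarrow> u + w \<in> subgen v"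
| sg_smult: "u \<in> subgen v \<Longrightarrow> smult c u \<in> subgen v"
| sg_act: "g \<in> U3 \<Longrightarrow> u \<in> subgen v \<Longrightarrow> act g u \<in> subgen v"

definition modN :: "kpoly set" where "modN = subgen phi"
definition modK :: "kpoly set" where "modK = subgen theta"

definition is_submod :: "kpoly set \<Rightarrow> bool" where
  "is_submod W \<longleftrightarrow> 0 \<in> W \<and> (\<forall>u\<in>W. \<forall>w\<in>W. u + w \<in> W) \<and> (\<forall>c. \<forall>u\<in>W. smult c u \<in> W)
     \<and> (\<forall>g\<in>U3. \<forall>u\<in>W. act g u \<in> W)"

definition simple_submod :: "kpoly set \<Rightarrow> bool" where
  "simple_submod S \<longleftrightarrow> is_submod S \<and> S \<noteq> {0} \<and>
     (\<forall>T. is_submod T \<and> T \<subseteq> S \<longrightarrow> T = {0} \<or> T = S)"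

inductive_set socle :: "kpoly set \<Rightarrow> kpoly set" for V where
  soc_zero: "0 \<in> socle V"
| soc_add: "simple_submod S \<Longrightarrow> S \<subseteq> V \<Longrightarrow> u \<in> S \<Longrightarrow> w \<in> socle V \<Longrightarrow> u + w \<in> socle V"

text \<open>Permutation module k[U3/H]: k-valued functions on the set of left cosets gH,
with g acting by (g.f)(gC) = f(C).\<close>
definition lcosets :: "mat3 set \<Rightarrow> mat3 set set" where
  "lcosets H = {(mmul g) ` H | g. g \<in> U3}"

definition permmod :: "mat3 set \<Rightarrow> (mat3 set \<Rightarrow> bit) set" where
  "permmod H = {f. \<forall>C. C \<notin> lcosets H \<longrightarrow> f C = 0}"

definition iso_perm :: "kpoly set \<Rightarrow> mat3 set \<Rightarrow> bool" where
  "iso_perm V H \<longleftrightarrow> (\<exists>\<Phi>. bij_betw \<Phi> V (permmod H)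
     \<and> (\<forall>u\<in>V. \<forall>w\<in>V. \<Phi> (u + w) = (\<lambda>C. \<Phi> u C + \<Phi> w C))
     \<and> (\<forall>c. \<forall>u\<in>V. \<Phi> (smult c u) = (\<lambda>C. c * \<Phi> u C))
     \<and> (\<forall>g\<in>U3. \<forall>u\<in>V. \<forall>C\<in>lcosets H. \<Phi> (act g u) ((mmul g) ` C) = \<Phi> u C))"

end

theory Submission
  imports Defs
begin

(* Writing g = [[1,a,b],[0,1,c],[0,0,1]], U3 acts on quadratic forms by an explicit linear
   substitution of their six coefficients. N is spanned by x^2, xy, xz and yz + z^2, and since H2
   fixes phi, the four vectors g phi, one for each coset gH2, form a basis of N; likewise the two
   vectors g theta, gH1 in U3/H1, form a basis of K = <xy + y^2, xz + z^2>. The coordinate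
   functionals of these orbit bases give the isomorphisms with the permutation modules.
   U3 is a 2-group in characteristic 2, so its simple modules are trivial. Applying operators
   1 + g to a nonzero element of N (resp. K) always reaches x^2 (resp. y^2 + xy), the unique
   nonzero fixed vector, so the socle is the line it spans. *)

declare add_bit_eq_xor [simp del] mult_bit_eq_and [simp del]
  bit_not_one_iff [simp del] bit_not_zero_iff [simp del]

lemma bit_eq_0_iff_neq_1: "(a::bit) = 0 \<longleftrightarrow> a \<noteq> 1"
  by (cases a) simp_all

lemma bit_add_eq_0_iff: "(a::bit) + b = 0 \<longleftrightarrow> a = b"
  by (cases a; cases b) simp_all

lemma bit_all_iff: "(\<forall>a::bit. P a) \<longleftrightarrow> P 0 \<and> P 1"
  by (metis bit_not_zero_iff)

(* Rewriting with these turns an identity in bit into a propositional tautology for argo; the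
   simp rules deleted above would loop with the first one. *)
lemmas bit_to_bool = bit_eq_0_iff_neq_1 add_bit_eq_xor mult_bit_eq_and

section \<open>Upper unitriangular matrices\<close>

lemma sum_lessThan_3: "(\<Sum>k<3::nat. f k) = f 0 + f 1 + (f 2 :: 'a::comm_monoid_add)"
  by (simp add: numeral_3_eq_3 numeral_2_eq_2 lessThan_Suc add_ac)

lemma mmul_assoc: "mmul (mmul f g) h = mmul f (mmul g h)"
  unfolding mmul_def
  by (simp add: fun_eq_iff sum_distrib_left sum_distrib_right mult.assoc) (intro allI sum.swap)

definition unitri :: "bit \<Rightarrow> bit \<Rightarrow> bit \<Rightarrow> mat3" where
  "unitri a b c = (\<lambda>i j. if i < 3 \<and> j < 3 then
     (if i = j then 1 else if i = 0 \<and> j = 1 then a else if i = 0 \<and> j = 2 then b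
      else if i = 1 \<and> j = 2 then c else 0) else 0)"

lemma unitri_entries [simp]:
  "unitri a b c 0 1 = a" "unitri a b c 0 2 = b" "unitri a b c 1 2 = c"
  by (simp_all add: unitri_def)

lemma unitri_eq_iff [simp]: "unitri a b c = unitri a' b' c' \<longleftrightarrow> a = a' \<and> b = b' \<and> c = c'"
  by (metis unitri_entries)

lemma mmul_unitri:
  "mmul (unitri a b c) (unitri a' b' c') = unitri (a + a') (b + b' + a * c') (c + c')"
  unfolding mmul_def sum_lessThan_3 by (rule ext)+ (auto simp: unitri_def)

lemma U3_eq_unitri: "U3 = {unitri a b c | a b c. True}"
proof
  show "U3 \<subseteq> {unitri a b c | a b c. True}"
  proof
    fix g assume g: "g \<in> U3"
    have "g = unitri (g 0 1) (g 0 2) (g 1 2)"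
    proof (rule ext, rule ext)
      fix i j
      show "g i j = unitri (g 0 1) (g 0 2) (g 1 2) i j"
        using g unfolding U3_def unitri_def
        by (cases "i < 3"; cases "j < 3"; auto simp: less_Suc_eq numeral_3_eq_3)
    qed
    then show "g \<in> {unitri a b c | a b c. True}" by blast
  qed
  show "{unitri a b c | a b c. True} \<subseteq> U3"
    by (auto simp: U3_def unitri_def)
qed

lemma unitri_in_U3 [simp]: "unitri a b c \<in> U3"
  by (auto simp: U3_eq_unitri)

lemma U3E:
  assumes "g \<in> U3"
  obtains a b c where "g = unitri a b c"
  using assms by (auto simp: U3_eq_unitri)

lemma mmul_in_U3: "g \<in> U3 \<Longrightarrow> h \<in> U3 \<Longrightarrow> mmul g h \<in> U3"
  by (elim U3E) (simp add: mmul_unitri)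

lemma one3_eq_unitri: "one3 = unitri 0 0 0"
  by (rule ext)+ (auto simp: one3_def unitri_def)

lemma elts_eq_unitri: "elt_b = unitri 1 0 0" "elt_c = unitri 0 1 0" "elt_d = unitri 0 0 1"
  by ((rule ext)+, auto simp: elt_b_def elt_c_def elt_d_def one3_def unitri_def)+

lemma H2_eq: "H2 = {unitri 0 0 0, unitri 0 0 1}"
proof
  show "H2 \<subseteq> {unitri 0 0 0, unitri 0 0 1}"
  proof
    fix h assume "h \<in> H2"
    then show "h \<in> {unitri 0 0 0, unitri 0 0 1}" unfolding H2_def
      by induction (auto simp: one3_eq_unitri elts_eq_unitri mmul_unitri)
  qed
  have "one3 \<in> H2" "mmul elt_d one3 \<in> H2"
    unfolding H2_def by (auto intro: gen.intros)
  then show "{unitri 0 0 0, unitri 0 0 1} \<subseteq> H2"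
    by (simp add: one3_eq_unitri elts_eq_unitri mmul_unitri)
qed

lemma H1_eq: "H1 = {unitri a b 0 | a b. True}"
proof
  show "H1 \<subseteq> {unitri a b 0 | a b. True}"
  proof
    fix h assume "h \<in> H1"
    then show "h \<in> {unitri a b 0 | a b. True}" unfolding H1_def
    proof induction
      case gen_one
      then show ?case by (simp add: one3_eq_unitri)
    next
      case (gen_mul s h)
      then show ?case by (auto simp: elts_eq_unitri mmul_unitri)
    qed
  qed
  have "one3 \<in> H1" "mmul elt_b one3 \<in> H1" "mmul elt_c one3 \<in> H1"
    "mmul elt_b (mmul elt_c one3) \<in> H1"
    unfolding H1_def by (auto intro: gen.intros)
  then have "unitri a b 0 \<in> H1" for a b
    by (cases a; cases b) (simp_all add: one3_eq_unitri elts_eq_unitri mmul_unitri)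
  then show "{unitri a b 0 | a b. True} \<subseteq> H1" by blast
qed

lemma lcoset_H2_eq: "mmul (unitri a b c) ` H2 = mmul (unitri a (b + a * c) 0) ` H2"
  by (cases c) (auto simp: H2_eq mmul_unitri)

lemma lcoset_H1: "mmul (unitri a b c) ` H1 = {unitri a' b' c | a' b'. True}"
proof
  show "mmul (unitri a b c) ` H1 \<subseteq> {unitri a' b' c | a' b'. True}"
    by (auto simp: H1_eq mmul_unitri)
  show "{unitri a' b' c | a' b'. True} \<subseteq> mmul (unitri a b c) ` H1"
  proof
    fix g assume "g \<in> {unitri a' b' c | a' b'. True}"
    then obtain a' b' where g: "g = unitri a' b' c" by blast
    have "g = mmul (unitri a b c) (unitri (a' + a) (b' + b) 0)"
      unfolding g mmul_unitri by (simp add: bit_to_bool; argo)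
    then show "g \<in> mmul (unitri a b c) ` H1" by (auto simp: H1_eq)
  qed
qed

lemma lcoset_H1_eq: "mmul (unitri a b c) ` H1 = mmul (unitri 0 0 c) ` H1"
  by (simp only: lcoset_H1)

section \<open>Quadratic forms and the action of U3\<close>

lemma zero_exponent_triple: "(0,0,0) = (0 :: nat \<times> nat \<times> nat)"
  by (simp add: zero_prod_def)

lemma Cst_0 [simp]: "Cst 0 = 0"
  by (simp add: Cst_def)

lemma Cst_1 [simp]: "Cst 1 = 1"
  by (simp add: Cst_def zero_exponent_triple)

lemma Cst_add: "Cst (a + b) = Cst a + Cst b"
  by (simp add: Cst_def single_add)

lemma Cst_mult: "Cst (a * b) = Cst a * Cst b"
  by (simp add: Cst_def mult_single)

lemma Cst_mult_single: "Cst c * Poly_Mapping.single m d = Poly_Mapping.single m (c * d)"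
  by (simp add: Cst_def mult_single zero_exponent_triple)

lemma kpoly_add_self: "(u::kpoly) + u = 0"
proof -
  have "u + u = Cst (1 + 1) * u"
    by (simp only: Cst_add Cst_1 distrib_right mult_1_left)
  then show ?thesis by simp
qed

lemma kpoly_add_eq_0_iff: "(u::kpoly) + w = 0 \<longleftrightarrow> u = w"
proof
  assume "u + w = 0"
  have "u = u + (w + w)"
    by (simp add: kpoly_add_self)
  also have "\<dots> = (u + w) + w"
    by (rule add.assoc[symmetric])
  also have "\<dots> = w"
    using \<open>u + w = 0\<close> by simp
  finally show "u = w" .
qed (simp add: kpoly_add_self)

lemma kpoly_square_add: "((u::kpoly) + v) * (u + v) = u * u + v * v"
proof -
  have "(u + v) * (u + v) = u * u + v * v + (u * v + u * v)"
    by (simp add: algebra_simps)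
  then show ?thesis by (simp add: kpoly_add_self)
qed

lemma act_eq_sum_superset:
  assumes "finite S" "Poly_Mapping.keys p \<subseteq> S"
  shows "act g p = (\<Sum>m\<in>S. Cst (Poly_Mapping.lookup p m)
           * lin g 0 ^ fst m * lin g 1 ^ fst (snd m) * lin g 2 ^ snd (snd m))"
  unfolding act_def
  by (rule sum.mono_neutral_left[OF assms]) (auto simp: in_keys_iff)

lemma act_add: "act g (p + q) = act g p + act g q"
proof -
  let ?S = "Poly_Mapping.keys p \<union> Poly_Mapping.keys q"
  have "act g (p + q) = (\<Sum>m\<in>?S. Cst (Poly_Mapping.lookup (p + q) m)
           * lin g 0 ^ fst m * lin g 1 ^ fst (snd m) * lin g 2 ^ snd (snd m))"
    by (rule act_eq_sum_superset) (simp_all add: keys_add)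
  also have "\<dots> = act g p + act g q"
    by (simp add: act_eq_sum_superset[of ?S] lookup_add Cst_add distrib_right sum.distrib)
  finally show ?thesis .
qed

lemma act_zero [simp]: "act g 0 = 0"
  by (simp add: act_def)

lemma act_single:
  "act g (Poly_Mapping.single m c)
     = Cst c * lin g 0 ^ fst m * lin g 1 ^ fst (snd m) * lin g 2 ^ snd (snd m)"
  by (subst act_eq_sum_superset[of "{m}"]) auto

lemma lin_unitri:
  "lin (unitri a b c) 0 = px"
  "lin (unitri a b c) 1 = Cst a * px + py"
  "lin (unitri a b c) 2 = Cst b * px + Cst c * py + pz"
  by (simp_all add: lin_def sum_lessThan_3 var_def unitri_def)

definition quad :: "bit \<Rightarrow> bit \<Rightarrow> bit \<Rightarrow> bit \<Rightarrow> bit \<Rightarrow> bit \<Rightarrow> kpoly" where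
  "quad p1 p2 p3 p4 p5 p6 =
     Poly_Mapping.single (2,0,0) p1 + Poly_Mapping.single (1,1,0) p2
   + Poly_Mapping.single (1,0,1) p3 + Poly_Mapping.single (0,2,0) p4
   + Poly_Mapping.single (0,1,1) p5 + Poly_Mapping.single (0,0,2) p6"

lemma lookup_quad:
  "Poly_Mapping.lookup (quad p1 p2 p3 p4 p5 p6) (2,0,0) = p1"
  "Poly_Mapping.lookup (quad p1 p2 p3 p4 p5 p6) (1,1,0) = p2"
  "Poly_Mapping.lookup (quad p1 p2 p3 p4 p5 p6) (1,0,1) = p3"
  "Poly_Mapping.lookup (quad p1 p2 p3 p4 p5 p6) (0,2,0) = p4"
  "Poly_Mapping.lookup (quad p1 p2 p3 p4 p5 p6) (0,1,1) = p5"
  "Poly_Mapping.lookup (quad p1 p2 p3 p4 p5 p6) (0,0,2) = p6"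
  by (simp_all add: quad_def lookup_add lookup_single)

lemma quad_eq_iff:
  "quad p1 p2 p3 p4 p5 p6 = quad q1 q2 q3 q4 q5 q6
     \<longleftrightarrow> p1 = q1 \<and> p2 = q2 \<and> p3 = q3 \<and> p4 = q4 \<and> p5 = q5 \<and> p6 = q6"
  by (metis lookup_quad)

lemma quad_0: "quad 0 0 0 0 0 0 = 0"
  by (simp add: quad_def)

lemma quad_add:
  "quad p1 p2 p3 p4 p5 p6 + quad q1 q2 q3 q4 q5 q6
     = quad (p1 + q1) (p2 + q2) (p3 + q3) (p4 + q4) (p5 + q5) (p6 + q6)"
  by (simp add: quad_def single_add add_ac)

lemma Cst_mult_quad:
  "Cst c * quad p1 p2 p3 p4 p5 p6 = quad (c * p1) (c * p2) (c * p3) (c * p4) (c * p5) (c * p6)"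
  by (simp add: quad_def distrib_left Cst_mult_single)

lemma smult_quad:
  "smult c (quad p1 p2 p3 p4 p5 p6) = quad (c * p1) (c * p2) (c * p3) (c * p4) (c * p5) (c * p6)"
  by (simp add: smult_def Cst_mult_quad)

lemma monomials_eq_quad:
  "px * px = quad 1 0 0 0 0 0" "px * py = quad 0 1 0 0 0 0" "px * pz = quad 0 0 1 0 0 0"
  "py * py = quad 0 0 0 1 0 0" "py * pz = quad 0 0 0 0 1 0" "pz * pz = quad 0 0 0 0 0 1"
  by (simp_all add: px_def py_def pz_def mult_single quad_def numeral_2_eq_2)

lemma quad_eq_sum_monomials:
  "quad p1 p2 p3 p4 p5 p6 = Cst p1 * (px * px) + Cst p2 * (px * py) + Cst p3 * (px * pz)
     + Cst p4 * (py * py) + Cst p5 * (py * pz) + Cst p6 * (pz * pz)"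
  by (simp add: monomials_eq_quad Cst_mult_quad quad_add)

lemma products_of_lin_unitri:
  "px * (Cst a * px + py) = quad a 1 0 0 0 0"
  "px * (Cst b * px + Cst c * py + pz) = quad b c 1 0 0 0"
  "(Cst a * px + py) * (Cst a * px + py) = quad (a * a) 0 0 1 0 0"
  "(Cst a * px + py) * (Cst b * px + Cst c * py + pz) = quad (a * b) (a * c + b) a c 1 0"
  "(Cst b * px + Cst c * py + pz) * (Cst b * px + Cst c * py + pz) = quad (b * b) 0 0 (c * c) 0 1"
  unfolding quad_eq_sum_monomials Cst_add Cst_mult Cst_0 Cst_1 kpoly_square_add
  by (simp_all add: algebra_simps)

lemma act_unitri_quad:
  "act (unitri a b c) (quad p1 p2 p3 p4 p5 p6) =
     quad (p1 + a * p2 + b * p3 + a * a * p4 + a * b * p5 + b * b * p6)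
          (p2 + c * p3 + (a * c + b) * p5) (p3 + a * p5) (p4 + c * p5 + c * c * p6) p5 p6"
proof -
  have "act (unitri a b c) (quad p1 p2 p3 p4 p5 p6) =
      Cst p1 * (px * px) + Cst p2 * (px * (Cst a * px + py))
    + Cst p3 * (px * (Cst b * px + Cst c * py + pz))
    + Cst p4 * ((Cst a * px + py) * (Cst a * px + py))
    + Cst p5 * ((Cst a * px + py) * (Cst b * px + Cst c * py + pz))
    + Cst p6 * ((Cst b * px + Cst c * py + pz) * (Cst b * px + Cst c * py + pz))"
    unfolding quad_def act_add act_single lin_unitri
    by (simp add: power2_eq_square mult.assoc numeral_2_eq_2)
  then show ?thesis
    unfolding monomials_eq_quad(1) products_of_lin_unitri Cst_mult_quad quad_add
    by (simp add: quad_eq_iff algebra_simps)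
qed

lemma phi_eq_quad: "phi = quad 0 0 0 0 1 1"
  by (simp add: phi_def power2_eq_square monomials_eq_quad quad_add)

lemma theta_eq_quad: "theta = quad 0 0 1 0 0 1"
  by (simp add: theta_def power2_eq_square monomials_eq_quad quad_add)

lemma d1_sq_eq_quad: "d1 ^ 2 = quad 1 0 0 0 0 0"
  by (simp add: d1_def power2_eq_square monomials_eq_quad)

lemma d2_eq_quad: "d2 = quad 0 1 0 1 0 0"
  by (simp add: d2_def power2_eq_square monomials_eq_quad quad_add)

section \<open>The modules N and K\<close>

lemma smult_0 [simp]: "smult 0 u = 0"
  by (simp add: smult_def)

lemma smult_1 [simp]: "smult 1 u = u"
  by (simp add: smult_def)

lemma lookup_smult: "Poly_Mapping.lookup (smult c u) m = c * Poly_Mapping.lookup u m"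
  by (cases c) simp_all

lemma subgen_subset:
  assumes "is_submod W" "v \<in> W"
  shows "subgen v \<subseteq> W"
proof
  fix u assume "u \<in> subgen v"
  then show "u \<in> W"
    by induction (use assms in \<open>auto simp: is_submod_def\<close>)
qed

lemma is_submod_subgen: "is_submod (subgen v)"
  unfolding is_submod_def by (blast intro: subgen.intros)

lemma submod_add_act: "is_submod W \<Longrightarrow> g \<in> U3 \<Longrightarrow> u \<in> W \<Longrightarrow> u + act g u \<in> W"
  unfolding is_submod_def by blast

lemma is_submod_quad_N: "is_submod {quad p q r 0 s s | p q r s. True}" (is "is_submod ?N")
  unfolding is_submod_def
proof (intro conjI ballI allI)
  show "0 \<in> ?N"
    by (auto simp: quad_eq_iff simp flip: quad_0)
  show "u + w \<in> ?N" if "u \<in> ?N" "w \<in> ?N" for u w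
    using that by (auto simp: quad_add quad_eq_iff)
  show "smult c u \<in> ?N" if "u \<in> ?N" for c u
    using that by (auto simp: smult_quad quad_eq_iff)
  show "act g u \<in> ?N" if "g \<in> U3" "u \<in> ?N" for g u
  proof -
    obtain a b c where g: "g = unitri a b c" using \<open>g \<in> U3\<close> by (rule U3E)
    obtain p q r s where u: "u = quad p q r 0 s s" using \<open>u \<in> ?N\<close> by blast
    have "act g u = quad (p + a * q + b * r + a * b * s + b * s) (q + c * r + (a * c + b) * s)
        (r + a * s) 0 s s"
      unfolding g u act_unitri_quad quad_eq_iff by (simp add: bit_to_bool; argo)
    then show ?thesis by blast
  qed
qed

lemma modN_eq: "modN = {quad p q r 0 s s | p q r s. True}" (is "_ = ?N")
proof
  show "modN \<subseteq> ?N"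
    unfolding modN_def using is_submod_quad_N
    by (rule subgen_subset) (auto simp: phi_eq_quad quad_eq_iff)
  show "?N \<subseteq> modN"
  proof
    fix u assume "u \<in> ?N"
    then obtain p q r s where u: "u = quad p q r 0 s s" by blast
    define v where "v g = act g phi" for g
    define w where "w = smult s (v (unitri 0 0 0))
        + smult p (v (unitri 0 0 0) + v (unitri 0 1 0) + v (unitri 1 0 0) + v (unitri 1 1 0))
        + smult q (v (unitri 1 0 0) + v (unitri 1 1 0)) + smult r (v (unitri 0 0 0) + v (unitri 1 0 0))"
    have "w \<in> subgen phi"
      unfolding w_def v_def by (intro sg_add sg_smult sg_act sg_gen unitri_in_U3)
    moreover have "w = u"
      unfolding w_def u v_def phi_eq_quad act_unitri_quad quad_add smult_quad quad_eq_iff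
      by (simp add: bit_to_bool; argo)
    ultimately show "u \<in> modN" unfolding modN_def by simp
  qed
qed

lemma is_submod_quad_K: "is_submod {quad 0 q r q 0 r | q r. True}" (is "is_submod ?K")
  unfolding is_submod_def
proof (intro conjI ballI allI)
  show "0 \<in> ?K"
    by (auto simp: quad_eq_iff simp flip: quad_0)
  show "u + w \<in> ?K" if "u \<in> ?K" "w \<in> ?K" for u w
    using that by (auto simp: quad_add quad_eq_iff)
  show "smult c u \<in> ?K" if "u \<in> ?K" for c u
    using that by (auto simp: smult_quad quad_eq_iff)
  show "act g u \<in> ?K" if "g \<in> U3" "u \<in> ?K" for g u
  proof -
    obtain a b c where g: "g = unitri a b c" using \<open>g \<in> U3\<close> by (rule U3E)
    obtain q r where u: "u = quad 0 q r q 0 r" using \<open>u \<in> ?K\<close> by blast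
    have "act g u = quad 0 (q + c * r) r (q + c * r) 0 r"
      unfolding g u act_unitri_quad quad_eq_iff by (simp add: bit_to_bool; argo)
    then show ?thesis by blast
  qed
qed

lemma modK_eq: "modK = {quad 0 q r q 0 r | q r. True}" (is "_ = ?K")
proof
  show "modK \<subseteq> ?K"
    unfolding modK_def using is_submod_quad_K
    by (rule subgen_subset) (auto simp: theta_eq_quad quad_eq_iff)
  show "?K \<subseteq> modK"
  proof
    fix u assume "u \<in> ?K"
    then obtain q r where u: "u = quad 0 q r q 0 r" by blast
    have "smult r theta + smult q (theta + act (unitri 0 0 1) theta) \<in> subgen theta"
      by (intro sg_add sg_smult sg_act sg_gen unitri_in_U3)
    moreover have "smult r theta + smult q (theta + act (unitri 0 0 1) theta) = u"
      unfolding u theta_eq_quad act_unitri_quad quad_add smult_quad quad_eq_iff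
      by (simp add: bit_to_bool; argo)
    ultimately show "u \<in> modK" unfolding modK_def by simp
  qed
qed

section \<open>Socles\<close>

lemma smult_line_eq: "{smult c x0 | c. True} = {0, x0}"
proof -
  have "smult c x0 \<in> {0, x0}" for c
    by (cases c) simp_all
  moreover have "0 = smult 0 x0" "x0 = smult 1 x0"
    by simp_all
  ultimately show ?thesis by blast
qed

lemma simple_submod_fixed_line:
  assumes "x0 \<noteq> 0" and fixed: "\<And>g. g \<in> U3 \<Longrightarrow> act g x0 = x0"
  shows "simple_submod {0, x0}"
proof -
  have "is_submod {0, x0}"
    unfolding is_submod_def
  proof (intro conjI ballI allI)
    show "u + w \<in> {0, x0}" if "u \<in> {0, x0}" "w \<in> {0, x0}" for u w
      using that kpoly_add_self[of x0] by auto
    show "smult c u \<in> {0, x0}" if "u \<in> {0, x0}" for c u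
      using that by (cases c) auto
    show "act g u \<in> {0, x0}" if "g \<in> U3" "u \<in> {0, x0}" for g u
      using that fixed by auto
  qed simp
  moreover have "T = {0} \<or> T = {0, x0}" if "is_submod T" "T \<subseteq> {0, x0}" for T
    using that unfolding is_submod_def by blast
  ultimately show ?thesis
    using \<open>x0 \<noteq> 0\<close> unfolding simple_submod_def by blast
qed

lemma socle_eq_fixed_line:
  assumes "0 \<in> V" "x0 \<in> V" "x0 \<noteq> 0"
    and fixed: "\<And>g. g \<in> U3 \<Longrightarrow> act g x0 = x0"
    and minimal: "\<And>W u. is_submod W \<Longrightarrow> u \<in> W \<Longrightarrow> u \<in> V \<Longrightarrow> u \<noteq> 0 \<Longrightarrow> x0 \<in> W"
  shows "socle V = {smult c x0 | c. True}"
  unfolding smult_line_eq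
proof
  have simple: "simple_submod {0, x0}"
    using \<open>x0 \<noteq> 0\<close> fixed by (rule simple_submod_fixed_line)
  show "socle V \<subseteq> {0, x0}"
  proof
    fix v assume "v \<in> socle V"
    then show "v \<in> {0, x0}"
    proof induction
      case (soc_add S u w)
      have "S = {0, x0}" if "u \<noteq> 0"
      proof -
        have "is_submod S"
          using soc_add.hyps(1) by (simp add: simple_submod_def)
        then have "{0, x0} \<subseteq> S"
          using minimal soc_add.hyps(2,3) that by (auto simp: is_submod_def)
        then show ?thesis
          using soc_add.hyps(1) simple \<open>x0 \<noteq> 0\<close> unfolding simple_submod_def by blast
      qed
      then have "u \<in> {0, x0}"
        using soc_add.hyps(3) by blast
      then show ?case
        using soc_add.IH kpoly_add_self[of x0] by auto
    qed simp
  qed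
  have "x0 + 0 \<in> socle V"
    by (rule soc_add[OF simple]) (auto simp: assms intro: soc_zero)
  then show "{0, x0} \<subseteq> socle V"
    by (simp add: soc_zero)
qed

lemma act_d1_sq: "g \<in> U3 \<Longrightarrow> act g (d1 ^ 2) = d1 ^ 2"
  by (elim U3E) (simp add: d1_sq_eq_quad act_unitri_quad)

lemma act_d2: "g \<in> U3 \<Longrightarrow> act g d2 = d2"
  by (elim U3E) (simp add: d2_eq_quad act_unitri_quad quad_eq_iff bit_to_bool)

(* Each 1 + g pushes coefficients down the flag; 1 + b and 1 + c reach x^2 from any nonzero u. *)
lemma d1_sq_mem_submod_modN:
  assumes W: "is_submod W" and "u \<in> W" "u \<in> modN" "u \<noteq> 0"
  shows "d1 ^ 2 \<in> W"
proof -
  obtain p q r s where u: "u = quad p q r 0 s s"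
    using \<open>u \<in> modN\<close> by (auto simp: modN_eq)
  have "u + act (unitri 1 0 0) u = quad q 0 s 0 0 0"
    unfolding u act_unitri_quad quad_add quad_eq_iff by (simp add: bit_to_bool; argo)
  then have w1: "quad q 0 s 0 0 0 \<in> W"
    using submod_add_act[OF W _ \<open>u \<in> W\<close>, of "unitri 1 0 0"] by simp
  have "quad q 0 s 0 0 0 + act (unitri 0 1 0) (quad q 0 s 0 0 0) = quad s 0 0 0 0 0"
    unfolding act_unitri_quad quad_add quad_eq_iff by (simp add: bit_to_bool; argo)
  then have w2: "quad s 0 0 0 0 0 \<in> W"
    using submod_add_act[OF W _ w1, of "unitri 0 1 0"] by simp
  have "u + act (unitri 0 1 0) u = quad (r + s) s 0 0 0 0"
    unfolding u act_unitri_quad quad_add quad_eq_iff by (simp add: bit_to_bool; argo)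
  then have w3: "quad (r + s) s 0 0 0 0 \<in> W"
    using submod_add_act[OF W _ \<open>u \<in> W\<close>, of "unitri 0 1 0"] by simp
  have "{u, quad q 0 s 0 0 0, quad s 0 0 0 0 0, quad (r + s) s 0 0 0 0} \<subseteq> W"
    using \<open>u \<in> W\<close> w1 w2 w3 by simp
  moreover have "quad 1 0 0 0 0 0 \<in> {u, quad q 0 s 0 0 0, quad s 0 0 0 0 0, quad (r + s) s 0 0 0 0}"
    using \<open>u \<noteq> 0\<close> unfolding u
    by (cases p; cases q; cases r; cases s) (simp_all add: quad_eq_iff flip: quad_0)
  ultimately show ?thesis
    unfolding d1_sq_eq_quad by (rule subsetD)
qed

lemma d2_mem_submod_modK:
  assumes W: "is_submod W" and "u \<in> W" "u \<in> modK" "u \<noteq> 0"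
  shows "d2 \<in> W"
proof -
  obtain q r where u: "u = quad 0 q r q 0 r"
    using \<open>u \<in> modK\<close> by (auto simp: modK_eq)
  have "u + act (unitri 0 0 1) u = quad 0 r 0 r 0 0"
    unfolding u act_unitri_quad quad_add quad_eq_iff by (simp add: bit_to_bool; argo)
  then have w1: "quad 0 r 0 r 0 0 \<in> W"
    using submod_add_act[OF W _ \<open>u \<in> W\<close>, of "unitri 0 0 1"] by simp
  have "{u, quad 0 r 0 r 0 0} \<subseteq> W"
    using \<open>u \<in> W\<close> w1 by simp
  moreover have "quad 0 1 0 1 0 0 \<in> {u, quad 0 r 0 r 0 0}"
    using \<open>u \<noteq> 0\<close> unfolding u
    by (cases q; cases r) (simp_all add: quad_eq_iff flip: quad_0)
  ultimately show ?thesis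
    unfolding d2_eq_quad by (rule subsetD)
qed

lemma socle_modN: "socle modN = {smult c (d1 ^ 2) | c. True}"
proof (rule socle_eq_fixed_line)
  show "0 \<in> modN" "d1 ^ 2 \<in> modN"
    by (auto simp: modN_eq d1_sq_eq_quad quad_eq_iff simp flip: quad_0)
  show "d1 ^ 2 \<noteq> 0"
    by (simp add: d1_sq_eq_quad quad_eq_iff flip: quad_0)
qed (fact act_d1_sq d1_sq_mem_submod_modN)+

lemma socle_modK: "socle modK = {smult c d2 | c. True}"
proof (rule socle_eq_fixed_line)
  show "0 \<in> modK" "d2 \<in> modK"
    by (auto simp: modK_eq d2_eq_quad quad_eq_iff simp flip: quad_0)
  show "d2 \<noteq> 0"
    by (simp add: d2_eq_quad quad_eq_iff flip: quad_0)
qed (fact act_d2 d2_mem_submod_modK)+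

section \<open>Permutation modules\<close>

definition coset_coord :: "mat3 set \<Rightarrow> (mat3 \<Rightarrow> kpoly \<Rightarrow> bit) \<Rightarrow> kpoly \<Rightarrow> mat3 set \<Rightarrow> bit" where
  "coset_coord H coord u C = (if C \<in> lcosets H then coord (SOME g. g \<in> C) u else 0)"

lemma coset_coord_lcoset:
  assumes "H \<noteq> {}" "g \<in> U3" and invariant: "\<And>h. h \<in> H \<Longrightarrow> coord (mmul g h) = coord g"
  shows "coset_coord H coord u (mmul g ` H) = coord g u"
proof -
  have "mmul g ` H \<in> lcosets H"
    unfolding lcosets_def using \<open>g \<in> U3\<close> by blast
  have "(SOME g'. g' \<in> mmul g ` H) \<in> mmul g ` H"
    using \<open>H \<noteq> {}\<close> by (simp add: some_in_eq)
  then obtain h where "h \<in> H" and "(SOME g'. g' \<in> mmul g ` H) = mmul g h"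
    by blast
  with \<open>mmul g ` H \<in> lcosets H\<close> show ?thesis
    unfolding coset_coord_def by (simp add: invariant)
qed

lemma inj_on_coset_coord:
  assumes "is_submod V" "H \<noteq> {}"
    and invariant: "\<And>g h. g \<in> U3 \<Longrightarrow> h \<in> H \<Longrightarrow> coord (mmul g h) = coord g"
    and additive: "\<And>g u w. coord g (u + w) = coord g u + coord g w"
    and kernel: "\<And>u. u \<in> V \<Longrightarrow> (\<And>g. g \<in> U3 \<Longrightarrow> coord g u = 0) \<Longrightarrow> u = 0"
  shows "inj_on (coset_coord H coord) V"
proof
  fix u w assume "u \<in> V" "w \<in> V" and eq: "coset_coord H coord u = coset_coord H coord w"
  have "u + w = 0"
  proof (rule kernel)
    show "u + w \<in> V"
      using \<open>is_submod V\<close> \<open>u \<in> V\<close> \<open>w \<in> V\<close> by (simp add: is_submod_def)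
    fix g assume "g \<in> U3"
    then have "coord g u = coord g w"
      using coset_coord_lcoset[OF \<open>H \<noteq> {}\<close> \<open>g \<in> U3\<close> invariant[OF \<open>g \<in> U3\<close>]] eq by metis
    then show "coord g (u + w) = 0"
      by (simp add: additive bit_add_eq_0_iff)
  qed
  then show "u = w"
    by (simp add: kpoly_add_eq_0_iff)
qed

lemma coset_coord_image:
  assumes "H \<noteq> {}"
    and invariant: "\<And>g h. g \<in> U3 \<Longrightarrow> h \<in> H \<Longrightarrow> coord (mmul g h) = coord g"
    and spanning: "\<And>f. \<exists>u\<in>V. \<forall>g\<in>U3. coord g u = f (mmul g ` H)"
  shows "coset_coord H coord ` V = permmod H"
proof
  show "coset_coord H coord ` V \<subseteq> permmod H"
    by (auto simp: permmod_def coset_coord_def)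
  show "permmod H \<subseteq> coset_coord H coord ` V"
  proof
    fix f assume f: "f \<in> permmod H"
    obtain u where "u \<in> V" and u: "\<And>g. g \<in> U3 \<Longrightarrow> coord g u = f (mmul g ` H)"
      using spanning by blast
    have "coset_coord H coord u C = f C" for C
    proof (cases "C \<in> lcosets H")
      case True
      then obtain g where "g \<in> U3" and C: "C = mmul g ` H"
        unfolding lcosets_def by blast
      then show ?thesis
        using coset_coord_lcoset[OF \<open>H \<noteq> {}\<close> \<open>g \<in> U3\<close> invariant[OF \<open>g \<in> U3\<close>]] u by simp
    next
      case False
      then show ?thesis
        using f by (simp add: coset_coord_def permmod_def)
    qed
    then show "f \<in> coset_coord H coord ` V"
      using \<open>u \<in> V\<close> by (metis image_eqI ext)
  qed
qed

lemma coset_coord_act: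
  assumes "H \<noteq> {}"
    and invariant: "\<And>g h. g \<in> U3 \<Longrightarrow> h \<in> H \<Longrightarrow> coord (mmul g h) = coord g"
    and equivariant: "\<And>g g' u. g \<in> U3 \<Longrightarrow> g' \<in> U3 \<Longrightarrow> u \<in> V \<Longrightarrow>
                         coord (mmul g g') (act g u) = coord g' u"
    and "g \<in> U3" "u \<in> V" "C \<in> lcosets H"
  shows "coset_coord H coord (act g u) (mmul g ` C) = coset_coord H coord u C"
proof -
  obtain g' where "g' \<in> U3" and C: "C = mmul g' ` H"
    using \<open>C \<in> lcosets H\<close> unfolding lcosets_def by blast
  have "mmul g g' \<in> U3"
    using \<open>g \<in> U3\<close> \<open>g' \<in> U3\<close> by (rule mmul_in_U3)
  have "mmul g ` C = mmul (mmul g g') ` H"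
    by (simp add: C image_image mmul_assoc)
  then show ?thesis
    using coset_coord_lcoset[OF \<open>H \<noteq> {}\<close> \<open>mmul g g' \<in> U3\<close> invariant[OF \<open>mmul g g' \<in> U3\<close>]]
      coset_coord_lcoset[OF \<open>H \<noteq> {}\<close> \<open>g' \<in> U3\<close> invariant[OF \<open>g' \<in> U3\<close>]]
      equivariant[OF \<open>g \<in> U3\<close> \<open>g' \<in> U3\<close> \<open>u \<in> V\<close>]
    by (simp add: C)
qed

(* The coordinate functionals of a basis of V indexed by U3/H, moved around by U3 as the cosets
   are, identify V with the permutation module. *)
lemma iso_perm_coset_coord:
  assumes "is_submod V" "H \<noteq> {}"
    and invariant: "\<And>g h. g \<in> U3 \<Longrightarrow> h \<in> H \<Longrightarrow> coord (mmul g h) = coord g"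
    and additive: "\<And>g u w. coord g (u + w) = coord g u + coord g w"
    and homogeneous: "\<And>g c u. coord g (smult c u) = c * coord g u"
    and equivariant: "\<And>g g' u. g \<in> U3 \<Longrightarrow> g' \<in> U3 \<Longrightarrow> u \<in> V \<Longrightarrow>
                         coord (mmul g g') (act g u) = coord g' u"
    and kernel: "\<And>u. u \<in> V \<Longrightarrow> (\<And>g. g \<in> U3 \<Longrightarrow> coord g u = 0) \<Longrightarrow> u = 0"
    and spanning: "\<And>f. \<exists>u\<in>V. \<forall>g\<in>U3. coord g u = f (mmul g ` H)"
  shows "iso_perm V H"
  unfolding iso_perm_def bij_betw_def
proof (intro exI[of _ "coset_coord H coord"] conjI ballI allI)
  show "inj_on (coset_coord H coord) V"
    using assms(1,2) invariant additive kernel by (rule inj_on_coset_coord)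
  show "coset_coord H coord ` V = permmod H"
    using assms(2) invariant spanning by (rule coset_coord_image)
  show "coset_coord H coord (u + w) = (\<lambda>C. coset_coord H coord u C + coset_coord H coord w C)" for u w
    by (simp add: fun_eq_iff coset_coord_def additive)
  show "coset_coord H coord (smult c u) = (\<lambda>C. c * coset_coord H coord u C)" for c u
    by (simp add: fun_eq_iff coset_coord_def homogeneous)
  show "coset_coord H coord (act g u) (mmul g ` C) = coset_coord H coord u C"
    if "g \<in> U3" "u \<in> V" "C \<in> lcosets H" for g u C
    using assms(2) invariant equivariant that by (rule coset_coord_act)
qed

(* The coefficient of g phi in the basis of N formed by the four vectors g phi, g in U3/H2;
   g phi depends only on a = g_01 and e = g_02 + g_01 g_12. *)
definition coordN :: "mat3 \<Rightarrow> kpoly \<Rightarrow> bit" where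
  "coordN g u = (let a = g 0 1; e = g 0 2 + g 0 1 * g 1 2 in
     (1 + e) * (1 + a) * Poly_Mapping.lookup u (0,0,2) + Poly_Mapping.lookup u (2,0,0)
     + (1 + e) * Poly_Mapping.lookup u (1,0,1) + a * Poly_Mapping.lookup u (1,1,0))"

lemma coordN_unitri:
  "coordN (unitri a b c) u = (1 + (b + a * c)) * (1 + a) * Poly_Mapping.lookup u (0,0,2)
     + Poly_Mapping.lookup u (2,0,0) + (1 + (b + a * c)) * Poly_Mapping.lookup u (1,0,1)
     + a * Poly_Mapping.lookup u (1,1,0)"
  unfolding coordN_def Let_def unitri_entries ..

lemma coordN_unitri_quad:
  "coordN (unitri a b c) (quad p1 p2 p3 p4 p5 p6)
     = (1 + (b + a * c)) * (1 + a) * p6 + p1 + (1 + (b + a * c)) * p3 + a * p2"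
  unfolding coordN_unitri lookup_quad ..

lemma coordN_unitri_cong:
  "b + a * c = b' + a * c' \<Longrightarrow> coordN (unitri a b c) = coordN (unitri a b' c')"
  by (simp add: fun_eq_iff coordN_unitri)

lemma coordN_mmul_H2: "g \<in> U3 \<Longrightarrow> h \<in> H2 \<Longrightarrow> coordN (mmul g h) = coordN g"
proof -
  assume "g \<in> U3" "h \<in> H2"
  obtain a b c where g: "g = unitri a b c"
    using \<open>g \<in> U3\<close> by (rule U3E)
  obtain x where h: "h = unitri 0 0 x"
    using \<open>h \<in> H2\<close> by (auto simp: H2_eq)
  show ?thesis
    unfolding g h mmul_unitri add_0_right
    by (rule coordN_unitri_cong) (simp add: bit_to_bool; argo)
qed

lemma coordN_add: "coordN g (u + w) = coordN g u + coordN g w"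
  by (simp add: coordN_def Let_def lookup_add algebra_simps)

lemma coordN_smult: "coordN g (smult c u) = c * coordN g u"
  by (simp add: coordN_def Let_def lookup_smult algebra_simps)

lemma coordN_act:
  assumes "g \<in> U3" "g' \<in> U3" "u \<in> modN"
  shows "coordN (mmul g g') (act g u) = coordN g' u"
proof -
  obtain a b c a' b' c' where "g = unitri a b c" "g' = unitri a' b' c'"
    using \<open>g \<in> U3\<close> \<open>g' \<in> U3\<close> by (meson U3E)
  moreover obtain p q r s where "u = quad p q r 0 s s"
    using \<open>u \<in> modN\<close> by (auto simp: modN_eq)
  ultimately show ?thesis
    by (simp add: mmul_unitri act_unitri_quad coordN_unitri_quad bit_to_bool; argo)
qed

lemma modN_coordN_eq_0:
  assumes "u \<in> modN" and "\<And>g. g \<in> U3 \<Longrightarrow> coordN g u = 0"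
  shows "u = 0"
proof -
  obtain p q r s where u: "u = quad p q r 0 s s"
    using \<open>u \<in> modN\<close> by (auto simp: modN_eq)
  have "coordN (unitri 0 0 0) u = 0" "coordN (unitri 0 1 0) u = 0"
    "coordN (unitri 1 0 0) u = 0" "coordN (unitri 1 1 0) u = 0"
    using assms(2) by simp_all
  then show ?thesis
    unfolding u coordN_unitri_quad by (simp add: quad_eq_iff bit_to_bool flip: quad_0; argo)
qed

lemma ex_modN_coordN: "\<exists>u\<in>modN. \<forall>g\<in>U3. coordN g u = f (mmul g ` H2)"
proof
  define F where "F a e = f (mmul (unitri a e 0) ` H2)" for a e
  define p where "p = F 0 1"
  define q where "q = F 1 1 + p"
  define r where "r = F 1 0 + p + q"
  define s where "s = F 0 0 + p + r"
  show "quad p q r 0 s s \<in> modN"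
    by (auto simp: modN_eq)
  have "\<forall>a e. coordN (unitri a e 0) (quad p q r 0 s s) + F a e = 0"
    by (simp add: bit_all_iff coordN_unitri_quad p_def q_def r_def s_def bit_to_bool; argo)
  then have "coordN (unitri a e 0) (quad p q r 0 s s) = F a e" for a e
    by (simp add: bit_add_eq_0_iff)
  moreover have "coordN (unitri a b c) = coordN (unitri a (b + a * c) 0)" for a b c
    by (rule coordN_unitri_cong) simp
  ultimately show "\<forall>g\<in>U3. coordN g (quad p q r 0 s s) = f (mmul g ` H2)"
    by (metis U3E F_def lcoset_H2_eq)
qed

lemma iso_perm_modN: "iso_perm modN H2"
proof (rule iso_perm_coset_coord[where coord = coordN])
  show "is_submod modN"
    unfolding modN_def by (rule is_submod_subgen)
  show "H2 \<noteq> {}"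
    by (simp add: H2_eq)
qed (fact coordN_mmul_H2 coordN_add coordN_smult coordN_act modN_coordN_eq_0 ex_modN_coordN)+

(* The coefficient of g theta in the basis theta, d theta of K; it depends only on g_12. *)
definition coordK :: "mat3 \<Rightarrow> kpoly \<Rightarrow> bit" where
  "coordK g u = (1 + g 1 2) * Poly_Mapping.lookup u (0,0,2) + Poly_Mapping.lookup u (0,2,0)"

lemma coordK_unitri:
  "coordK (unitri a b c) u = (1 + c) * Poly_Mapping.lookup u (0,0,2) + Poly_Mapping.lookup u (0,2,0)"
  unfolding coordK_def unitri_entries ..

lemma coordK_unitri_quad: "coordK (unitri a b c) (quad p1 p2 p3 p4 p5 p6) = (1 + c) * p6 + p4"
  unfolding coordK_unitri lookup_quad ..

lemma coordK_mmul_H1: "g \<in> U3 \<Longrightarrow> h \<in> H1 \<Longrightarrow> coordK (mmul g h) = coordK g"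
proof -
  assume "g \<in> U3" "h \<in> H1"
  obtain a b c where g: "g = unitri a b c"
    using \<open>g \<in> U3\<close> by (rule U3E)
  obtain x y where h: "h = unitri x y 0"
    using \<open>h \<in> H1\<close> by (auto simp: H1_eq)
  show ?thesis
    unfolding g h by (simp add: fun_eq_iff mmul_unitri coordK_unitri)
qed

lemma coordK_add: "coordK g (u + w) = coordK g u + coordK g w"
  by (simp add: coordK_def lookup_add algebra_simps)

lemma coordK_smult: "coordK g (smult c u) = c * coordK g u"
  by (simp add: coordK_def lookup_smult algebra_simps)

lemma coordK_act:
  assumes "g \<in> U3" "g' \<in> U3" "u \<in> modK"
  shows "coordK (mmul g g') (act g u) = coordK g' u"
proof -
  obtain a b c a' b' c' where "g = unitri a b c" "g' = unitri a' b' c'"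
    using \<open>g \<in> U3\<close> \<open>g' \<in> U3\<close> by (meson U3E)
  moreover obtain q r where "u = quad 0 q r q 0 r"
    using \<open>u \<in> modK\<close> by (auto simp: modK_eq)
  ultimately show ?thesis
    by (simp add: mmul_unitri act_unitri_quad coordK_unitri_quad bit_to_bool; argo)
qed

lemma modK_coordK_eq_0:
  assumes "u \<in> modK" and "\<And>g. g \<in> U3 \<Longrightarrow> coordK g u = 0"
  shows "u = 0"
proof -
  obtain q r where u: "u = quad 0 q r q 0 r"
    using \<open>u \<in> modK\<close> by (auto simp: modK_eq)
  have "coordK (unitri 0 0 0) u = 0" "coordK (unitri 0 0 1) u = 0"
    using assms(2) by simp_all
  then show ?thesis
    unfolding u coordK_unitri_quad by (simp add: quad_eq_iff bit_to_bool flip: quad_0; argo)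
qed

lemma ex_modK_coordK: "\<exists>u\<in>modK. \<forall>g\<in>U3. coordK g u = f (mmul g ` H1)"
proof
  define q where "q = f (mmul (unitri 0 0 1) ` H1)"
  define r where "r = f (mmul (unitri 0 0 0) ` H1) + q"
  show "quad 0 q r q 0 r \<in> modK"
    by (auto simp: modK_eq)
  have "\<forall>c. coordK (unitri 0 0 c) (quad 0 q r q 0 r) + f (mmul (unitri 0 0 c) ` H1) = 0"
    by (simp add: bit_all_iff coordK_unitri_quad q_def r_def bit_to_bool; argo)
  then have "coordK (unitri 0 0 c) (quad 0 q r q 0 r) = f (mmul (unitri 0 0 c) ` H1)" for c
    by (simp add: bit_add_eq_0_iff)
  moreover have "coordK (unitri a b c) = coordK (unitri 0 0 c)" for a b c
    by (simp add: fun_eq_iff coordK_unitri)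
  ultimately show "\<forall>g\<in>U3. coordK g (quad 0 q r q 0 r) = f (mmul g ` H1)"
    by (metis U3E lcoset_H1_eq)
qed

lemma iso_perm_modK: "iso_perm modK H1"
proof (rule iso_perm_coset_coord[where coord = coordK])
  show "is_submod modK"
    unfolding modK_def by (rule is_submod_subgen)
  show "H1 \<noteq> {}"
    by (auto simp: H1_eq)
qed (fact coordK_mmul_H1 coordK_add coordK_smult coordK_act modK_coordK_eq_0 ex_modK_coordK)+

theorem lemma4p5:
  shows "iso_perm modN H2 \<and> socle modN = {smult c (d1 ^ 2) | c. True}
       \<and> iso_perm modK H1 \<and> socle modK = {smult c d2 | c. True}"
  using iso_perm_modN socle_modN iso_perm_modK socle_modK by blast

end
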